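(* Let $(X,\mathcal{R})$ be a partially metric association scheme with rank $d+1\geq 3$, partially metric with respect to the connected relation $R_1$, and suppose the scheme graph $\Gamma$ of $R_1$ has valency $k\geq 3$. Let $a_1=p^1_{11}$ and $b_1=p^1_{12}=k-1-a_1$. Let $E$ be a minimal scheme idempotent with multiplicity $m$ for corresponding eigenvalue $\theta\neq\pm k$. Then $$m\geq k-\frac{k(\theta+1)^2a_1(a_1+1)}{((a_1+1)\theta+k)^2+ka_1b_1},$$ with equality if and only if $E$ is a light tail.
   Context: A (symmetric) association scheme with rank $d+1$ on a finite set $X$ ($|X|=n$) is a partition $\mathcal{R}=\{R_0,\dots,R_d\}$ of $X\times X$ with $R_0$ the diagonal, each $R_i$ symmetric, and numbers $p^h_{ij}$ such that for every $(x,y)\in R_h$ the number of $z$ with $(x,z)\in R_i$, $(z,y)\in R_j$ equals $p^h_{ij}$. The scheme graph of $R_i$ ($i>0$) is the graph on $X$ with $x\sim y$ iff $(x,y)\in R_i$; its relation matrix is $A_i$ ($A_0=I$). The Bose–Mesner algebra (span of the $A_i$) has a basis of primitive (minimal scheme) idempotents $E_0=\frac1nJ,E_1,\dots,E_d$; the multiplicity of $E_j$ is its rank. If $A_1E_j=\theta_jE_j$, $\theta_j$ is the corresponding eigenvalue on $E_j$. Krein parameters $q^h_{ij}$ are defined by $E_i\circ E_j=\frac1n\sum_h q^h_{ij}E_h$ ($\circ$ = entrywise product). The scheme is $t$-partially metric with respect to a connected relation $R_1$ if, after reordering, $R_i$ is exactly the distance-$i$ relation of the scheme graph of $R_1$ for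 $i=1,\dots,t$; it is called partially metric if it is $2$-partially metric (or has rank 2). A minimal scheme idempotent $E=E_j$ is a light tail if the matrix $F=\sum_{h\neq 0}q^h_{jj}E_h$ is nonzero and $A_1F=\eta F$ for some real $\eta$. *)

theory Defs
  imports "HOL-Analysis.Analysis"
begin

text \<open>The ground set X is a finite type 'x (X = UNIV). A scheme of rank d+1 is a
  family R :: nat => ('x * 'x) set with classes R 0, ..., R d.\<close>

definition assoc_scheme :: "nat \<Rightarrow> (nat \<Rightarrow> ('x::finite \<times> 'x) set) \<Rightarrow> bool" where
  "assoc_scheme d R \<longleftrightarrow>
     (\<forall>i\<le>d. R i \<noteq> {}) \<and>
     (\<forall>i\<le>d. \<forall>j\<le>d. i \<noteq> j \<longrightarrow> R i \<inter> R j = {}) \<and>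
     (\<Union>i\<in>{0..d}. R i) = UNIV \<and>
     R 0 = Id \<and>
     (\<forall>i\<le>d. sym (R i)) \<and>
     (\<forall>h\<le>d. \<forall>i\<le>d. \<forall>j\<le>d. \<exists>p::nat. \<forall>(x,y)\<in>R h.
        card {z. (x,z) \<in> R i \<and> (z,y) \<in> R j} = p)"

definition intnum :: "(nat \<Rightarrow> ('x::finite \<times> 'x) set) \<Rightarrow> nat \<Rightarrow> nat \<Rightarrow> nat \<Rightarrow> nat" where
  "intnum R h i j = (SOME p. \<forall>(x,y)\<in>R h. card {z. (x,z) \<in> R i \<and> (z,y) \<in> R j} = p)"

definition graph_dist_is :: "('x \<times> 'x) set \<Rightarrow> nat \<Rightarrow> 'x \<Rightarrow> 'x \<Rightarrow> bool" where
  "graph_dist_is G i x y \<longleftrightarrow> (x,y) \<in> G ^^ i \<and> (\<forall>j<i. (x,y) \<notin> G ^^ j)"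

definition connected_rel :: "('x \<times> 'x) set \<Rightarrow> bool" where
  "connected_rel G \<longleftrightarrow> (\<forall>x y. (x,y) \<in> G\<^sup>*)"

text \<open>t-partially metric with respect to R 1 (with the labelling fixed so that
  R i is the distance-i relation for i = 1..t).\<close>
definition t_partially_metric :: "nat \<Rightarrow> (nat \<Rightarrow> ('x \<times> 'x) set) \<Rightarrow> bool" where
  "t_partially_metric t R \<longleftrightarrow> connected_rel (R 1) \<and>
     (\<forall>i\<in>{1..t}. R i = {(x,y). graph_dist_is (R 1) i x y})"

definition rel_mat :: "(nat \<Rightarrow> ('x::finite \<times> 'x) set) \<Rightarrow> nat \<Rightarrow> real^'x^'x" where
  "rel_mat R i = (\<chi> x y. if (x,y) \<in> R i then 1 else 0)"

definition Jmat :: "real^'x::finite^'x" where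
  "Jmat = (\<chi> x y. 1)"

definition hadamard :: "real^'x::finite^'x \<Rightarrow> real^'x^'x \<Rightarrow> real^'x^'x" where
  "hadamard A B = (\<chi> x y. A $ x $ y * B $ x $ y)"

definition bose_mesner :: "nat \<Rightarrow> (nat \<Rightarrow> ('x::finite \<times> 'x) set) \<Rightarrow> (real^'x^'x) set" where
  "bose_mesner d R = span (rel_mat R ` {0..d})"

definition prim_idem :: "nat \<Rightarrow> (nat \<Rightarrow> ('x::finite \<times> 'x) set) \<Rightarrow> real^'x^'x \<Rightarrow> bool" where
  "prim_idem d R E \<longleftrightarrow> E \<in> bose_mesner d R \<and> E ** E = E \<and> E \<noteq> 0 \<and>
     (\<forall>F\<in>bose_mesner d R. F ** F = F \<and> F ** E = F \<longrightarrow> F = 0 \<or> F = E)"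

text \<open>Krein parameters: the coefficients q with
  E_i o E_j = (1/n) * sum_h q^h_ij E_h, indexing the primitive idempotents by themselves.\<close>
definition krein_expansion :: "nat \<Rightarrow> (nat \<Rightarrow> ('x::finite \<times> 'x) set) \<Rightarrow> real^'x^'x \<Rightarrow> real^'x^'x
    \<Rightarrow> (real^'x^'x \<Rightarrow> real) \<Rightarrow> bool" where
  "krein_expansion d R Ei Ej q \<longleftrightarrow>
     hadamard Ei Ej = (1 / real CARD('x)) *\<^sub>R (\<Sum>H\<in>{H. prim_idem d R H}. q H *\<^sub>R H)"

definition light_tail :: "nat \<Rightarrow> (nat \<Rightarrow> ('x::finite \<times> 'x) set) \<Rightarrow> real^'x^'x \<Rightarrow> bool" where
  "light_tail d R E \<longleftrightarrow> prim_idem d R E \<and>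
     (\<exists>q. krein_expansion d R E E q \<and>
        (let F = (\<Sum>H\<in>{H. prim_idem d R H} - {(1 / real CARD('x)) *\<^sub>R Jmat}. q H *\<^sub>R H)
         in F \<noteq> 0 \<and> (\<exists>eta::real. rel_mat R 1 ** F = eta *\<^sub>R F)))"

end

theory Submission
  imports Defs
begin

(* Write E_x for the rows of the primitive idempotent E and n = |X|. The matrix
   T = E \<circ> E - (E_xx / n) J is the Gram matrix of the centred vectors w_x = E_x \<otimes> E_x - mean.
   Cauchy-Schwarz for the families (w_x) and (\<Sum>y~x. w_y), summed over x, gives
   k p1^2 \<le> p0 (p0 + a1 p1 + b1 p2), where p_i is the value of T on R_i; partial metricity is
   what makes the neighbour sums expressible through p0, p1, p2 alone. Eliminating the p_i via
   A_1 E = \<theta> E and m = n E_xx turns this into the bound on m, with equality iff A_1 T is a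
   multiple of T. As n T is the part of the Krein expansion of E \<circ> E away from J/n, this is
   exactly the light tail condition. *)

lemma sum_UNIV_prod: "(\<Sum>p\<in>UNIV. f p) = (\<Sum>a\<in>UNIV. \<Sum>b\<in>UNIV. f (a, b))"
  by (simp add: sum.cartesian_product)

lemma sum_swap_outer:
  "(\<Sum>a\<in>A. \<Sum>b\<in>B. \<Sum>c\<in>C. f a b c) = (\<Sum>c\<in>C. \<Sum>a\<in>A. \<Sum>b\<in>B. f a b c)"
  by (simp add: sum.swap[of _ B C] sum.swap[of _ A C])

lemma matrix_add_rdistrib: "(A + B) ** C = A ** C + B ** (C::real^'n^'n)"
  by (simp add: matrix_matrix_mult_def vec_eq_iff sum.distrib distrib_right)

lemma matrix_diff_rdistrib: "(A - B) ** C = A ** C - B ** (C::real^'n^'n)"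
  by (simp add: matrix_matrix_mult_def vec_eq_iff sum_subtractf left_diff_distrib)

lemma matrix_diff_ldistrib: "C ** (A - B) = C ** A - C ** (B::real^'n^'n)"
  by (simp add: matrix_matrix_mult_def vec_eq_iff sum_subtractf right_diff_distrib)

lemma matrix_scaleR_left: "(c *\<^sub>R A) ** B = c *\<^sub>R (A ** (B::real^'n^'n))"
  by (simp add: scalar_matrix_assoc)

lemma matrix_scaleR_right: "A ** (c *\<^sub>R B) = c *\<^sub>R (A ** (B::real^'n^'n))"
  by (simp add: matrix_scalar_ac scalar_matrix_assoc)

lemma matrix_sum_rdistrib: "(\<Sum>i\<in>I. f i) ** (B::real^'n^'n) = (\<Sum>i\<in>I. f i ** B)"
  by (induction I rule: infinite_finite_induct) (simp_all add: matrix_add_rdistrib)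

lemma matrix_sum_ldistrib: "(A::real^'n^'n) ** (\<Sum>i\<in>I. f i) = (\<Sum>i\<in>I. A ** f i)"
  by (induction I rule: infinite_finite_induct) (simp_all add: matrix_add_ldistrib)

lemma linear_matrix_mult_left: "linear (\<lambda>X::real^'n^'n. A ** X)"
  by (rule linearI) (simp_all add: matrix_add_ldistrib matrix_scaleR_right)

lemma symmetric_matrix_inner: "transpose Y = Y \<Longrightarrow> (Y *v a) \<bullet> b = a \<bullet> ((Y::real^'n^'n) *v b)"
  by (metis dot_lmul_matrix vector_transpose_matrix)

lemma symmetric_matrix_square_eq_0:
  fixes Z :: "real^'n^'n"
  assumes "transpose Z = Z" "Z ** Z = 0"
  shows "Z = 0"
proof -
  have "(\<Sum>z\<in>UNIV. (Z$x$z)\<^sup>2) = 0" for x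
  proof -
    have "(Z ** Z) $ x $ x = (\<Sum>z\<in>UNIV. (Z$x$z)\<^sup>2)"
      using assms(1) by (simp add: matrix_matrix_mult_def power2_eq_square transpose_def vec_eq_iff)
    then show ?thesis using assms(2) by simp
  qed
  then show ?thesis by (simp add: vec_eq_iff sum_nonneg_eq_0_iff)
qed

lemma linear_surj_on_if_inj_on:
  fixes f :: "'a::euclidean_space \<Rightarrow> 'a"
  assumes "subspace V" "linear f" "f ` V \<subseteq> V" "\<forall>x\<in>V. f x = 0 \<longrightarrow> x = 0"
  shows "f ` V = V"
proof -
  have "inj_on f (span V)"
    using linear_inj_on_iff_eq_0[OF assms(2,1)] assms(1,4) by (simp add: span_eq_iff[THEN iffD2])
  then have "dim (f ` V) = dim V" by (rule dim_image_eq[OF assms(2)])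
  then show ?thesis
    using subspace_dim_equal[OF linear_subspace_image[OF assms(2,1)] assms(1,3)] by simp
qed

lemma rank_eq_trace_if_symmetric_idempotent:
  fixes E :: "real^'n^'n"
  assumes sym: "transpose E = E" and idem: "E ** E = E"
  shows "real (rank E) = trace E"
proof -
  define S where "S = range (\<lambda>v. E *v v)"
  have "subspace S" unfolding S_def
    by (rule linear_subspace_image[OF matrix_vector_mul_linear subspace_UNIV])
  then obtain B where B: "B \<subseteq> S" "pairwise orthogonal B" "\<And>x. x \<in> B \<Longrightarrow> norm x = 1"
      "independent B" "card B = dim S" "span B = S"
    using orthonormal_basis_subspace by blast
  have fin: "finite B" using B(4) by (rule finiteI_independent)
  have unit: "b \<bullet> b = 1" if "b \<in> B" for b
    using B(3)[OF that] by (simp add: power2_norm_eq_inner[symmetric])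
  have "E *v v = (\<Sum>b\<in>B. (v \<bullet> b) *\<^sub>R b)" for v
  proof -
    have fixed: "E *v b = b" if "b \<in> B" for b
      using that B(1) idem unfolding S_def by (auto simp: matrix_vector_mul_assoc)
    have "E *v v \<in> span B" unfolding B(6) S_def by blast
    then have "E *v v = (\<Sum>b\<in>B. ((E *v v) \<bullet> b) *\<^sub>R b)"
      using orthonormal_basis_expand[OF B(2,3) _ fin] by simp
    also have "\<dots> = (\<Sum>b\<in>B. (v \<bullet> b) *\<^sub>R b)"
      by (intro sum.cong refl) (simp add: symmetric_matrix_inner[OF sym] fixed)
    finally show ?thesis .
  qed
  then have "E$x$x = (\<Sum>b\<in>B. b$x * b$x)" for x
  proof -
    have "E$x$x = (E *v axis x 1) $ x"
      by (simp add: matrix_vector_mult_def axis_def if_distrib cong: if_cong)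
    with \<open>E *v axis x 1 = _\<close> show ?thesis by (simp add: inner_axis')
  qed
  then have "trace E = (\<Sum>b\<in>B. b \<bullet> b)"
    by (simp add: trace_def inner_vec_def sum.swap[of _ B])
  also have "\<dots> = real (rank E)" using unit B(5) rank_dim_range[of E] unfolding S_def by simp
  finally show ?thesis by simp
qed

lemma Cauchy_Schwarz_sum_eq_imp_proportional:
  fixes f g :: "'a \<Rightarrow> real"
  assumes "finite I" and eq: "(\<Sum>i\<in>I. f i * g i)\<^sup>2 = (\<Sum>i\<in>I. (f i)\<^sup>2) * (\<Sum>i\<in>I. (g i)\<^sup>2)"
    and pos: "(\<Sum>i\<in>I. (f i)\<^sup>2) > 0" and "i \<in> I"
  shows "g i = ((\<Sum>i\<in>I. f i * g i) / (\<Sum>i\<in>I. (f i)\<^sup>2)) * f i"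
proof -
  define r where "r = (\<Sum>i\<in>I. f i * g i) / (\<Sum>i\<in>I. (f i)\<^sup>2)"
  have "(\<Sum>i\<in>I. (g i - r * f i)\<^sup>2)
      = (\<Sum>i\<in>I. (g i)\<^sup>2) - 2 * r * (\<Sum>i\<in>I. f i * g i) + r\<^sup>2 * (\<Sum>i\<in>I. (f i)\<^sup>2)"
    by (simp add: algebra_simps power2_eq_square sum_distrib_left flip: sum.distrib)
  also have "\<dots> = 0"
    using pos eq by (simp add: r_def power2_eq_square field_simps)
  finally have "\<forall>i\<in>I. (g i - r * f i)\<^sup>2 = 0"
    using \<open>finite I\<close> by (simp add: sum_nonneg_eq_0_iff)
  then show ?thesis using \<open>i \<in> I\<close> by (simp add: r_def)
qed

lemma rayleigh_maximizer_is_eigenvector: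
  fixes Y :: "real^'n^'n"
  assumes S: "subspace S" and sym: "transpose Y = Y" and inv: "\<And>u. u \<in> S \<Longrightarrow> Y *v u \<in> S"
    and v: "v \<in> S" "v \<bullet> v = 1"
    and max: "\<And>u. u \<in> S \<Longrightarrow> (Y *v u) \<bullet> u \<le> ((Y *v v) \<bullet> v) * (u \<bullet> u)"
  shows "Y *v v = ((Y *v v) \<bullet> v) *\<^sub>R v"
proof -
  define l where "l = (Y *v v) \<bullet> v"
  define w where "w = Y *v v - l *\<^sub>R v"
  define C where "C = l * (w \<bullet> w) - (Y *v w) \<bullet> w"
  have wS: "w \<in> S" unfolding w_def using S inv v by (simp add: subspace_diff subspace_mul)
  have wv: "v \<bullet> w = 0" by (simp add: w_def inner_diff_right v(2) l_def inner_commute)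
  have Yvw: "(Y *v v) \<bullet> w = w \<bullet> w" and Ywv: "(Y *v w) \<bullet> v = w \<bullet> w"
    using wv symmetric_matrix_inner[OF sym, of w v]
    by (simp_all add: w_def inner_diff inner_commute)
  have key: "2 * t * (w \<bullet> w) \<le> t\<^sup>2 * C" for t
  proof -
    have "v + t *\<^sub>R w \<in> S" using S v wS by (simp add: subspace_add subspace_mul)
    from max[OF this] have "(Y *v (v + t *\<^sub>R w)) \<bullet> (v + t *\<^sub>R w) \<le> l * ((v + t *\<^sub>R w) \<bullet> (v + t *\<^sub>R w))"
      by (simp add: l_def)
    also have "(v + t *\<^sub>R w) \<bullet> (v + t *\<^sub>R w) = 1 + t\<^sup>2 * (w \<bullet> w)"
      using wv by (simp add: inner_add_left inner_add_right v(2) inner_commute power2_eq_square)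
    finally have "l + 2 * t * (w \<bullet> w) + t\<^sup>2 * ((Y *v w) \<bullet> w) \<le> l * (1 + t\<^sup>2 * (w \<bullet> w))"
      by (simp add: matrix_vector_right_distrib matrix_vector_mult_scaleR inner_add_left
          inner_add_right Ywv Yvw l_def[symmetric] power2_eq_square algebra_simps)
    then show ?thesis by (simp add: C_def algebra_simps)
  qed
  have "w = 0"
  proof (rule ccontr)
    assume "w \<noteq> 0"
    then have ww: "w \<bullet> w > 0" by simp
    define t where "t = (w \<bullet> w) / (\<bar>C\<bar> + 1)"
    have t: "t > 0" "t * \<bar>C\<bar> < w \<bullet> w"
      using ww by (simp_all add: t_def field_simps)
    have "2 * (w \<bullet> w) \<le> t * C" using key[of t] t(1) by (simp add: power2_eq_square)
    also have "\<dots> \<le> t * \<bar>C\<bar>" using t(1) by (simp add: mult_left_mono)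
    finally show False using t(2) ww by simp
  qed
  then show ?thesis by (simp add: w_def l_def)
qed

lemma exists_eigenvector_in_range:
  fixes G Y :: "real^'n^'n"
  assumes G: "G ** G = G" "G \<noteq> 0" and Y: "transpose Y = Y" "G ** Y = Y"
  shows "\<exists>v l. G *v v = v \<and> v \<noteq> 0 \<and> Y *v v = l *\<^sub>R v"
proof -
  define S where "S = {v. G *v v = v}"
  have S: "subspace S" unfolding S_def subspace_def
    by (simp add: matrix_vector_right_distrib matrix_vector_mult_scaleR)
  have inv: "Y *v u \<in> S" if "u \<in> S" for u
    using that Y(2) unfolding S_def by (simp add: matrix_vector_mul_assoc)
  have "closed S" unfolding S_def
    by (intro closed_Collect_eq matrix_vector_mult_linear_continuous_on continuous_on_id)
  then have cpt: "compact (S \<inter> sphere 0 1)" by (simp add: closed_Int_compact)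
  obtain u where "G *v u \<noteq> 0" using G(2) by (metis matrix_eq matrix_vector_mult_0)
  then have "(1 / norm (G *v u)) *\<^sub>R (G *v u) \<in> S \<inter> sphere 0 1"
    unfolding S_def by (simp add: matrix_vector_mult_scaleR matrix_vector_mul_assoc G(1))
  then have ne: "S \<inter> sphere 0 1 \<noteq> {}" by blast
  have "continuous_on (S \<inter> sphere 0 1) (\<lambda>v. (Y *v v) \<bullet> v)"
    by (intro continuous_on_inner matrix_vector_mult_linear_continuous_on continuous_on_id)
  then obtain v where v: "v \<in> S \<inter> sphere 0 1"
    and vmax: "\<And>u. u \<in> S \<inter> sphere 0 1 \<Longrightarrow> (Y *v u) \<bullet> u \<le> (Y *v v) \<bullet> v"
    using continuous_attains_sup[OF cpt ne] by blast
  have vv: "v \<bullet> v = 1" using v by (simp add: power2_norm_eq_inner[symmetric])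
  have max: "(Y *v u) \<bullet> u \<le> ((Y *v v) \<bullet> v) * (u \<bullet> u)" if "u \<in> S" for u
  proof (cases "u = 0")
    case False
    have "(1 / norm u) *\<^sub>R u \<in> S \<inter> sphere 0 1"
      using that False S by (simp add: subspace_mul)
    from vmax[OF this] False show ?thesis
      by (simp add: matrix_vector_mult_scaleR power2_norm_eq_inner[symmetric]
          divide_le_eq power2_eq_square mult.commute)
  qed simp
  have "Y *v v = ((Y *v v) \<bullet> v) *\<^sub>R v"
    using rayleigh_maximizer_is_eigenvector[OF S Y(1) inv _ vv max] v by blast
  moreover have "v \<noteq> 0" using vv by auto
  ultimately show ?thesis using v unfolding S_def by blast
qed

section \<open>The Bose-Mesner algebra\<close>

lemma Jmat_nth: "Jmat $ x $ y = 1"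
  by (simp add: Jmat_def)

locale association_scheme =
  fixes d :: nat and R :: "nat \<Rightarrow> ('x::finite \<times> 'x) set"
  assumes scheme: "assoc_scheme d R"
begin

lemma R_nonempty: "i \<le> d \<Longrightarrow> R i \<noteq> {}"
  using scheme unfolding assoc_scheme_def by (elim conjE) simp

lemma R_disjoint: "i \<le> d \<Longrightarrow> j \<le> d \<Longrightarrow> (x,y) \<in> R i \<Longrightarrow> (x,y) \<in> R j \<Longrightarrow> i = j"
  using scheme unfolding assoc_scheme_def by (elim conjE) (metis disjoint_iff)

lemma R_cover: "\<exists>i\<le>d. (x,y) \<in> R i"
proof -
  have "(x,y) \<in> (\<Union>i\<in>{0..d}. R i)"
    using scheme unfolding assoc_scheme_def by (elim conjE) simp
  then show ?thesis by auto
qed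

lemma R_0: "R 0 = Id"
  using scheme unfolding assoc_scheme_def by (elim conjE)

lemma R_sym: "i \<le> d \<Longrightarrow> (x,y) \<in> R i \<Longrightarrow> (y,x) \<in> R i"
  using scheme unfolding assoc_scheme_def sym_def by (elim conjE) simp

lemma card_eq_intnum:
  assumes "h \<le> d" "i \<le> d" "j \<le> d" "(x,y) \<in> R h"
  shows "card {z. (x,z) \<in> R i \<and> (z,y) \<in> R j} = intnum R h i j"
proof -
  have "\<forall>h\<le>d. \<forall>i\<le>d. \<forall>j\<le>d. \<exists>p::nat. \<forall>(x,y)\<in>R h.
      card {z. (x,z) \<in> R i \<and> (z,y) \<in> R j} = p"
    using scheme unfolding assoc_scheme_def by (elim conjE)
  then obtain p where "\<forall>(x,y)\<in>R h. card {z. (x,z) \<in> R i \<and> (z,y) \<in> R j} = p"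
    using assms(1-3) by blast
  then have "\<forall>(x,y)\<in>R h. card {z. (x,z) \<in> R i \<and> (z,y) \<in> R j} = intnum R h i j"
    unfolding intnum_def by (rule someI)
  with assms(4) show ?thesis by blast
qed

definition rel_index :: "'x \<Rightarrow> 'x \<Rightarrow> nat" where
  "rel_index x y = (THE i. i \<le> d \<and> (x,y) \<in> R i)"

lemma rel_index: "rel_index x y \<le> d" "(x,y) \<in> R (rel_index x y)"
proof -
  obtain i where i: "i \<le> d" "(x,y) \<in> R i" using R_cover by blast
  have "rel_index x y = i" unfolding rel_index_def
    by (rule the_equality) (use i R_disjoint in auto)
  with i show "rel_index x y \<le> d" "(x,y) \<in> R (rel_index x y)" by auto
qed

lemma rel_index_eq_iff: "i \<le> d \<Longrightarrow> rel_index x y = i \<longleftrightarrow> (x,y) \<in> R i"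
  using rel_index R_disjoint by metis

lemma rel_index_commute: "rel_index y x = rel_index x y"
  using rel_index R_sym rel_index_eq_iff by metis

lemma rel_index_eq_0_iff: "rel_index x y = 0 \<longleftrightarrow> x = y"
  using rel_index_eq_iff[of 0] R_0 by auto

definition class_constant :: "real^'x^'x \<Rightarrow> bool" where
  "class_constant M \<longleftrightarrow> (\<forall>x y x' y'. rel_index x y = rel_index x' y' \<longrightarrow> M$x$y = M$x'$y')"

text \<open>The value of M at some pair of R i; meaningful only for class-constant M and i \<le> d.\<close>

definition class_value :: "real^'x^'x \<Rightarrow> nat \<Rightarrow> real" where
  "class_value M i = (case SOME p. p \<in> R i of (x, y) \<Rightarrow> M$x$y)"

lemma class_constantI:
  "(\<And>x y x' y'. rel_index x y = rel_index x' y' \<Longrightarrow> M$x$y = M$x'$y') \<Longrightarrow> class_constant M"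
  unfolding class_constant_def by blast

lemma class_constantD:
  "class_constant M \<Longrightarrow> rel_index x y = rel_index x' y' \<Longrightarrow> M$x$y = M$x'$y'"
  unfolding class_constant_def by blast

lemma class_constant_nth:
  assumes "class_constant M" "i \<le> d" "(x,y) \<in> R i"
  shows "M$x$y = class_value M i"
proof -
  obtain x' y' where p: "(SOME p. p \<in> R i) = (x', y')" by fastforce
  have "(x', y') \<in> R i" using p some_in_eq R_nonempty[OF assms(2)] by metis
  then have "rel_index x y = rel_index x' y'" using assms(2,3) rel_index_eq_iff by metis
  from class_constantD[OF assms(1) this] p show ?thesis unfolding class_value_def by simp
qed

lemma class_constant_diag: "class_constant M \<Longrightarrow> M$x$x = class_value M 0"
  using class_constant_nth[of M 0 x x] by (simp add: R_0)

lemma class_constant_sym: "class_constant M \<Longrightarrow> M$y$x = M$x$y"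
  using class_constantD[OF _ rel_index_commute] .

lemma class_constant_transpose: "class_constant M \<Longrightarrow> transpose M = M"
  by (simp add: transpose_def vec_eq_iff class_constant_sym)

lemma class_constant_hadamard:
  assumes "class_constant M" "class_constant N"
  shows "class_constant (hadamard M N)"
proof (rule class_constantI)
  fix x y x' y' assume "rel_index x y = rel_index x' y'"
  with class_constantD[OF assms(1) this] class_constantD[OF assms(2) this]
  show "hadamard M N $x$y = hadamard M N $x'$y'" by (simp add: hadamard_def)
qed

lemma subspace_class_constant: "subspace {M. class_constant M}"
proof -
  have "class_constant (M + N)" if "class_constant M" "class_constant N" for M N
  proof (rule class_constantI)
    fix x y x' y' assume "rel_index x y = rel_index x' y'"
    with class_constantD[OF that(1) this] class_constantD[OF that(2) this]
    show "(M + N)$x$y = (M + N)$x'$y'" by simp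
  qed
  moreover have "class_constant (c *\<^sub>R M)" if "class_constant M" for c M
  proof (rule class_constantI)
    fix x y x' y' assume "rel_index x y = rel_index x' y'"
    with class_constantD[OF that this] show "(c *\<^sub>R M)$x$y = (c *\<^sub>R M)$x'$y'" by simp
  qed
  moreover have "class_constant 0" by (rule class_constantI) simp
  ultimately show ?thesis unfolding subspace_def by blast
qed

lemma class_constant_diff: "class_constant M \<Longrightarrow> class_constant N \<Longrightarrow> class_constant (M - N)"
  using subspace_diff[OF subspace_class_constant] by blast

lemma class_constant_scaleR: "class_constant M \<Longrightarrow> class_constant (c *\<^sub>R M)"
  using subspace_mul[OF subspace_class_constant] by blast

lemma class_constant_sum:
  "(\<And>i. i \<in> I \<Longrightarrow> class_constant (f i)) \<Longrightarrow> class_constant (\<Sum>i\<in>I. f i)"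
  using subspace_sum[OF subspace_class_constant, of I f] by simp

lemma class_constant_rel_mat:
  assumes "i \<le> d"
  shows "class_constant (rel_mat R i)"
proof (rule class_constantI)
  fix x y x' y' assume "rel_index x y = rel_index x' y'"
  then have "(x,y) \<in> R i \<longleftrightarrow> (x',y') \<in> R i" using rel_index_eq_iff[OF assms] by metis
  then show "rel_mat R i $x$y = rel_mat R i $x'$y'" by (simp add: rel_mat_def)
qed

lemma class_constant_mat_1: "class_constant (mat 1)"
proof (rule class_constantI)
  fix x y x' y' :: 'x assume "rel_index x y = rel_index x' y'"
  then have "x = y \<longleftrightarrow> x' = y'" using rel_index_eq_0_iff by metis
  then show "mat 1 $x$y = (mat 1 :: real^'x^'x) $x'$y'" by (simp add: mat_def)
qed

lemma class_constant_Jmat: "class_constant Jmat"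
  by (intro class_constantI) (simp add: Jmat_def)

lemma class_constant_expansion:
  assumes "class_constant M"
  shows "M = (\<Sum>i\<in>{0..d}. class_value M i *\<^sub>R rel_mat R i)"
proof -
  have "(\<Sum>i\<in>{0..d}. class_value M i *\<^sub>R rel_mat R i) $ x $ y = M $ x $ y" for x y
  proof -
    have "(\<Sum>i\<in>{0..d}. class_value M i *\<^sub>R rel_mat R i) $ x $ y
        = (\<Sum>i\<in>{0..d}. class_value M i * rel_mat R i $ x $ y)"
      by (simp add: sum_component)
    also have "\<dots> = (\<Sum>i\<in>{0..d}. if rel_index x y = i then class_value M i else 0)"
      by (intro sum.cong refl) (simp add: rel_mat_def rel_index_eq_iff)
    also have "\<dots> = M $ x $ y"
      using rel_index class_constant_nth[OF assms rel_index] by (simp add: sum.delta)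
    finally show ?thesis .
  qed
  then show ?thesis by (simp add: vec_eq_iff)
qed

lemma bose_mesner_eq: "bose_mesner d R = {M. class_constant M}"
proof
  show "bose_mesner d R \<subseteq> {M. class_constant M}"
    unfolding bose_mesner_def
    by (rule span_minimal) (use subspace_class_constant class_constant_rel_mat in auto)
  show "{M. class_constant M} \<subseteq> bose_mesner d R"
  proof
    fix M assume "M \<in> {M. class_constant M}"
    then have "M = (\<Sum>i\<in>{0..d}. class_value M i *\<^sub>R rel_mat R i)"
      using class_constant_expansion by simp
    also have "\<dots> \<in> bose_mesner d R" unfolding bose_mesner_def
      by (intro span_sum span_mul span_base) auto
    finally show "M \<in> bose_mesner d R" .
  qed
qed

lemma class_constant_rel_mat_mult:
  assumes "i \<le> d" "j \<le> d"
  shows "class_constant (rel_mat R i ** rel_mat R j)"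
proof -
  have "(rel_mat R i ** rel_mat R j) $ x $ y = real (intnum R (rel_index x y) i j)" for x y
  proof -
    have "(rel_mat R i ** rel_mat R j) $ x $ y
        = (\<Sum>z\<in>UNIV. if (x,z) \<in> R i \<and> (z,y) \<in> R j then 1 else 0)"
      by (auto simp: matrix_matrix_mult_def rel_mat_def intro!: sum.cong)
    also have "\<dots> = real (card {z. (x,z) \<in> R i \<and> (z,y) \<in> R j})"
      by (simp add: sum.If_cases)
    finally show ?thesis using card_eq_intnum assms rel_index by simp
  qed
  then show ?thesis unfolding class_constant_def by simp
qed

text \<open>Closure under products comes from the intersection numbers, via the expansion of
  both factors in the basis of relation matrices.\<close>

lemma class_constant_mult:
  assumes "class_constant M" "class_constant N"
  shows "class_constant (M ** N)"
proof -
  define a b where "a = class_value M" and "b = class_value N"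
  have "M = (\<Sum>i\<in>{0..d}. a i *\<^sub>R rel_mat R i)" "N = (\<Sum>j\<in>{0..d}. b j *\<^sub>R rel_mat R j)"
    unfolding a_def b_def using class_constant_expansion assms by blast+
  then have "M ** N = (\<Sum>i\<in>{0..d}. a i *\<^sub>R rel_mat R i) ** (\<Sum>j\<in>{0..d}. b j *\<^sub>R rel_mat R j)"
    by simp
  also have "\<dots> = (\<Sum>i\<in>{0..d}. a i *\<^sub>R (rel_mat R i ** (\<Sum>j\<in>{0..d}. b j *\<^sub>R rel_mat R j)))"
    by (simp add: matrix_sum_rdistrib matrix_scaleR_left)
  also have "\<dots> = (\<Sum>i\<in>{0..d}. \<Sum>j\<in>{0..d}. (a i * b j) *\<^sub>R (rel_mat R i ** rel_mat R j))"
    by (simp add: matrix_sum_ldistrib matrix_scaleR_right scaleR_sum_right)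
  also have "class_constant \<dots>"
    by (intro class_constant_sum class_constant_scaleR class_constant_rel_mat_mult) auto
  finally show ?thesis .
qed

lemma class_constant_mult_commute:
  assumes "class_constant M" "class_constant N"
  shows "M ** N = N ** M"
proof -
  have "M ** N = transpose (M ** N)"
    using class_constant_transpose[OF class_constant_mult[OF assms]] by simp
  also have "\<dots> = N ** M"
    using assms class_constant_transpose by (simp add: matrix_transpose_mul)
  finally show ?thesis .
qed

lemma class_constant_mult_Jmat:
  assumes "class_constant M"
  shows "M ** Jmat = (\<Sum>z\<in>UNIV. M$a$z) *\<^sub>R Jmat"
proof -
  have c: "class_constant (M ** Jmat)" using assms class_constant_Jmat by (rule class_constant_mult)
  have row: "(M ** Jmat) $ x $ y = (\<Sum>z\<in>UNIV. M$x$z)" for x y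
    by (simp add: matrix_matrix_mult_def Jmat_def)
  have "(\<Sum>z\<in>UNIV. M$x$z) = (\<Sum>z\<in>UNIV. M$a$z)" for x
    using class_constant_diag[OF c, of x] class_constant_diag[OF c, of a] unfolding row by simp
  then show ?thesis by (simp add: vec_eq_iff row Jmat_nth)
qed

section \<open>Primitive idempotents\<close>

definition primitive_idempotent :: "real^'x^'x \<Rightarrow> bool" where
  "primitive_idempotent E \<longleftrightarrow> class_constant E \<and> E ** E = E \<and> E \<noteq> 0 \<and>
     (\<forall>F. class_constant F \<and> F ** F = F \<and> F ** E = F \<longrightarrow> F = 0 \<or> F = E)"

lemma prim_idem_iff: "prim_idem d R E \<longleftrightarrow> primitive_idempotent E"
  unfolding prim_idem_def primitive_idempotent_def bose_mesner_eq by auto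

text \<open>For an idempotent G this is the ideal generated by G in the Bose-Mesner algebra.\<close>

definition ideal_of :: "real^'x^'x \<Rightarrow> (real^'x^'x) set" where
  "ideal_of G = {X. class_constant X \<and> X ** G = X}"

lemma subspace_ideal_of: "subspace (ideal_of G)"
  using subspace_class_constant unfolding subspace_def ideal_of_def
  by (auto simp: matrix_add_rdistrib matrix_scaleR_left)

lemma ideal_of_mult: "class_constant A \<Longrightarrow> X \<in> ideal_of G \<Longrightarrow> A ** X \<in> ideal_of G"
  unfolding ideal_of_def by (auto intro: class_constant_mult simp: matrix_mul_assoc[symmetric])

text \<open>The Bose-Mesner algebra has no nilpotents (its elements are symmetric), so multiplication
  by Z is bijective on the ideal Z\<A>; a preimage of Z is then a unit idempotent for Z.\<close>

lemma exists_unit_idempotent: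
  assumes Z: "class_constant Z"
  shows "\<exists>X. class_constant X \<and> (Z ** X) ** (Z ** X) = Z ** X \<and> Z ** (Z ** X) = Z"
proof -
  define W where "W = (\<lambda>X. Z ** X) ` {X. class_constant X}"
  have sW: "subspace W" unfolding W_def
    by (rule linear_subspace_image[OF linear_matrix_mult_left subspace_class_constant])
  have W_cc: "class_constant Y" if "Y \<in> W" for Y
    using that Z class_constant_mult unfolding W_def by blast
  have ZW: "Z ** Y \<in> W" if "class_constant Y" for Y
    unfolding W_def using that by blast
  have inj: "Y = 0" if Y: "Y \<in> W" "Z ** Y = 0" for Y
  proof -
    obtain X where X: "class_constant X" "Y = Z ** X" using Y(1) unfolding W_def by blast
    have "Y ** Y = Z ** ((X ** Z) ** X)" using X(2) by (simp add: matrix_mul_assoc)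
    also have "\<dots> = (Z ** Y) ** X"
      using X(2) class_constant_mult_commute[OF X(1) Z] by (simp add: matrix_mul_assoc)
    finally have "Y ** Y = 0" using Y(2) by simp
    then show ?thesis
      using symmetric_matrix_square_eq_0 class_constant_transpose W_cc Y(1) by blast
  qed
  have "(\<lambda>Y. Z ** Y) ` W = W"
    using linear_surj_on_if_inj_on[OF sW linear_matrix_mult_left] ZW W_cc inj by blast
  moreover have "Z \<in> W" using ZW[OF class_constant_mat_1] by simp
  ultimately obtain U where U: "U \<in> W" "Z ** U = Z" by (metis imageE)
  then obtain X where X: "class_constant X" "U = Z ** X" unfolding W_def by blast
  have "U ** U - U = Z ** (X ** U - X)"
    using X(2) by (simp add: matrix_diff_ldistrib matrix_mul_assoc)
  then have "U ** U - U \<in> W"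
    using ZW X(1) W_cc[OF U(1)] by (simp add: class_constant_diff class_constant_mult)
  moreover have "Z ** (U ** U - U) = 0"
    by (simp add: matrix_diff_ldistrib matrix_mul_assoc U(2))
  ultimately have "U ** U = U" using inj[of "U ** U - U"] by simp
  then show ?thesis using X U by blast
qed

lemma exists_ideal_annihilator:
  assumes G: "G \<in> ideal_of G" and N: "N \<in> ideal_of G"
    and v: "G *v v = v" "v \<noteq> 0" "N *v v = 0"
  shows "\<exists>Z\<in>ideal_of G. Z \<noteq> 0 \<and> N ** Z = 0"
proof (rule ccontr)
  assume "\<not> ?thesis"
  moreover have "(\<lambda>X. N ** X) ` ideal_of G \<subseteq> ideal_of G"
    using ideal_of_mult N unfolding ideal_of_def by blast
  ultimately have "(\<lambda>X. N ** X) ` ideal_of G = ideal_of G"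
    using linear_surj_on_if_inj_on[OF subspace_ideal_of linear_matrix_mult_left] by blast
  then obtain X where X: "X \<in> ideal_of G" "N ** X = G" using G by (metis imageE)
  have "v = (X ** N) *v v"
    using v(1) X N class_constant_mult_commute[of N X] unfolding ideal_of_def by simp
  also have "\<dots> = 0" by (simp add: matrix_vector_mul_assoc[symmetric] v(3))
  finally show False using v(2) by simp
qed

text \<open>Y has an eigenvector v in the range of G, with eigenvalue l. If Y \<noteq> l G, an annihilator
  of Y - l G in the ideal yields an idempotent strictly between 0 and G.\<close>

lemma primitive_idempotent_ideal_eq_scalar:
  assumes G: "primitive_idempotent G" and Y: "Y \<in> ideal_of G"
  shows "\<exists>c. Y = c *\<^sub>R G"
proof -
  have Gc: "class_constant G" "G ** G = G" "G \<noteq> 0"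
    and min: "\<And>F. class_constant F \<Longrightarrow> F ** F = F \<Longrightarrow> F ** G = F \<Longrightarrow> F = 0 \<or> F = G"
    using G unfolding primitive_idempotent_def by auto
  have GI: "G \<in> ideal_of G" using Gc unfolding ideal_of_def by simp
  have Yc: "class_constant Y" "Y ** G = Y" using Y unfolding ideal_of_def by auto
  then have "G ** Y = Y" using class_constant_mult_commute[OF Gc(1)] by simp
  then obtain v l where v: "G *v v = v" "v \<noteq> 0" "Y *v v = l *\<^sub>R v"
    using exists_eigenvector_in_range[OF Gc(2,3) class_constant_transpose[OF Yc(1)]] by blast
  define N where "N = Y - l *\<^sub>R G"
  have N: "N \<in> ideal_of G" unfolding N_def
    using subspace_ideal_of GI Y by (simp add: subspace_diff subspace_mul)
  have Nv: "N *v v = 0" unfolding N_def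
    by (simp add: matrix_vector_mult_diff_rdistrib v scaleR_matrix_vector_assoc[symmetric])
  show ?thesis
  proof (rule ccontr)
    assume no_scalar: "\<nexists>c. Y = c *\<^sub>R G"
    obtain Z where Z: "Z \<in> ideal_of G" "Z \<noteq> 0" "N ** Z = 0"
      using exists_ideal_annihilator[OF GI N v(1,2) Nv] by blast
    have Zc: "class_constant Z" using Z(1) unfolding ideal_of_def by simp
    then obtain X where X: "class_constant X" "(Z ** X) ** (Z ** X) = Z ** X" "Z ** (Z ** X) = Z"
      using exists_unit_idempotent by blast
    have "Z ** X = X ** Z" using class_constant_mult_commute[OF Zc X(1)] .
    then have UI: "Z ** X \<in> ideal_of G" using ideal_of_mult[OF X(1) Z(1)] by simp
    have "Z ** X \<noteq> 0" using X(3) Z(2) by auto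
    moreover have "Z ** X \<noteq> G"
    proof
      assume "Z ** X = G"
      then have "N = (N ** Z) ** X"
        using N unfolding ideal_of_def by (simp add: matrix_mul_assoc[symmetric])
      then have "N = 0" using Z(3) by simp
      then show False using no_scalar unfolding N_def by auto
    qed
    ultimately show False using min[OF _ X(2)] UI unfolding ideal_of_def by blast
  qed
qed

lemma dim_ideal_of_less:
  assumes K: "K \<in> ideal_of G" and G: "G \<in> ideal_of G" and "G ** K \<noteq> G"
  shows "dim (ideal_of K) < dim (ideal_of G)"
proof -
  have "ideal_of K \<subseteq> ideal_of G"
  proof
    fix X assume "X \<in> ideal_of K"
    then have "X ** G = (X ** K) ** G" unfolding ideal_of_def by simp
    also have "\<dots> = X ** (K ** G)" by (simp only: matrix_mul_assoc)
    also have "\<dots> = X" using K \<open>X \<in> ideal_of K\<close> unfolding ideal_of_def by simp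
    finally show "X \<in> ideal_of G" using \<open>X \<in> ideal_of K\<close> unfolding ideal_of_def by simp
  qed
  moreover have "G \<notin> ideal_of K" using assms(3) unfolding ideal_of_def by simp
  ultimately have "span (ideal_of K) \<subset> span (ideal_of G)"
    using G subspace_ideal_of by (auto simp: span_eq_iff[THEN iffD2])
  then show ?thesis by (rule dim_psubset)
qed

text \<open>Splitting a non-primitive idempotent G as G' + (G - G') shrinks the ideals, so induction
  on their dimension decomposes the whole algebra into primitive idempotents.\<close>

lemma ideal_of_in_span_primitive:
  assumes "class_constant G" "G ** G = G" "class_constant X"
  shows "X ** G \<in> span {H. primitive_idempotent H}"
  using assms
proof (induction "dim (ideal_of G)" arbitrary: G rule: less_induct)
  case less
  have GI: "G \<in> ideal_of G" using less.prems unfolding ideal_of_def by simp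
  have XG: "X ** G \<in> ideal_of G" using ideal_of_mult[OF less.prems(3) GI] .
  consider (zero) "G = 0" | (primitive) "primitive_idempotent G"
    | (split) G' where "class_constant G'" "G' ** G' = G'" "G' ** G = G'" "G' \<noteq> 0" "G' \<noteq> G"
    using less.prems unfolding primitive_idempotent_def by blast
  then show ?case
  proof cases
    case zero
    then show ?thesis by (simp add: span_zero)
  next
    case primitive
    then obtain c where "X ** G = c *\<^sub>R G" using primitive_idempotent_ideal_eq_scalar XG by blast
    then show ?thesis using primitive by (simp add: span_mul span_base)
  next
    case (split G')
    have GG': "G ** G' = G'" using class_constant_mult_commute[OF less.prems(1) split(1)] split(3) by simp
    define G'' where "G'' = G - G'"
    have G'': "class_constant G''" "G'' ** G'' = G''" "G'' ** G = G''" "G ** G'' \<noteq> G"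
      unfolding G''_def using less.prems split GG'
      by (simp_all add: class_constant_diff matrix_diff_rdistrib matrix_diff_ldistrib)
    have "dim (ideal_of G') < dim (ideal_of G)"
      using dim_ideal_of_less[of G' G] GI split GG' unfolding ideal_of_def by simp
    then have "X ** G' \<in> span {H. primitive_idempotent H}"
      using less.hyps split(1,2) less.prems(3) by blast
    moreover have "dim (ideal_of G'') < dim (ideal_of G)"
      using dim_ideal_of_less[of G'' G] GI G'' unfolding ideal_of_def by simp
    then have "X ** G'' \<in> span {H. primitive_idempotent H}"
      using less.hyps G''(1,2) less.prems(3) by blast
    moreover have "X ** G = X ** G' + X ** G''" unfolding G''_def by (simp add: matrix_diff_ldistrib)
    ultimately show ?thesis by (simp add: span_add)
  qed
qed

lemma class_constant_in_span_primitive: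
  "class_constant X \<Longrightarrow> X \<in> span {H. primitive_idempotent H}"
  using ideal_of_in_span_primitive[OF class_constant_mat_1, of X] by simp

lemma primitive_idempotent_mult_eq_0:
  assumes "primitive_idempotent H" "primitive_idempotent H'" "H \<noteq> H'"
  shows "H ** H' = 0"
proof -
  have H: "class_constant H" "H ** H = H" and H': "class_constant H'" "H' ** H' = H'"
    using assms unfolding primitive_idempotent_def by auto
  define K where "K = H ** H'"
  have c: "H' ** H = H ** H'" using class_constant_mult_commute H(1) H'(1) by blast
  have "class_constant K" unfolding K_def using H H' by (intro class_constant_mult)
  moreover have "K ** K = K" "K ** H = K" "K ** H' = K"
    unfolding K_def by (metis H(2) H'(2) c matrix_mul_assoc)+
  ultimately show ?thesis
    using assms unfolding primitive_idempotent_def K_def by metis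
qed

lemma independent_primitive_idempotents: "independent {H. primitive_idempotent H}"
  unfolding independent_explicit_module
proof (intro allI impI)
  fix t u v assume t: "finite t" "t \<subseteq> {H. primitive_idempotent H}" "(\<Sum>v\<in>t. u v *\<^sub>R v) = 0" "v \<in> t"
  have "(\<Sum>w\<in>t. u w *\<^sub>R w) ** v = (\<Sum>w\<in>t. u w *\<^sub>R (w ** v))"
    by (simp add: matrix_sum_rdistrib matrix_scaleR_left)
  also have "\<dots> = (\<Sum>w\<in>t. if w = v then u v *\<^sub>R v else 0)"
  proof (rule sum.cong)
    fix w assume "w \<in> t"
    then show "u w *\<^sub>R (w ** v) = (if w = v then u v *\<^sub>R v else 0)"
      using t primitive_idempotent_mult_eq_0[of w v] unfolding primitive_idempotent_def by auto
  qed simp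
  also have "\<dots> = u v *\<^sub>R v" using t by (simp add: sum.delta')
  finally have "u v *\<^sub>R v = 0" using t(3) by simp
  moreover have "v \<noteq> 0" using t unfolding primitive_idempotent_def by auto
  ultimately show "u v = 0" by simp
qed

lemma finite_primitive_idempotents: "finite {H. primitive_idempotent H}"
  using independent_primitive_idempotents by (rule finiteI_independent)

lemma Jmat_mult_Jmat: "Jmat ** Jmat = real CARD('x) *\<^sub>R (Jmat :: real^'x^'x)"
  by (simp add: matrix_matrix_mult_def Jmat_def vec_eq_iff)

lemma primitive_idempotent_Jmat: "primitive_idempotent ((1 / real CARD('x)) *\<^sub>R Jmat)"
  unfolding primitive_idempotent_def
proof (intro conjI allI impI)
  let ?n = "real CARD('x)" and ?J = "Jmat :: real^'x^'x"
  show "class_constant ((1 / ?n) *\<^sub>R ?J)" by (intro class_constant_scaleR class_constant_Jmat)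
  show "((1 / ?n) *\<^sub>R ?J) ** ((1 / ?n) *\<^sub>R ?J) = (1 / ?n) *\<^sub>R ?J"
    by (simp add: matrix_scaleR_left matrix_scaleR_right Jmat_mult_Jmat)
  have J0: "?J \<noteq> 0" by (simp add: vec_eq_iff Jmat_nth)
  then show "(1 / ?n) *\<^sub>R ?J \<noteq> 0" by simp
  fix F assume F: "class_constant F \<and> F ** F = F \<and> F ** ((1 / ?n) *\<^sub>R ?J) = F"
  obtain a :: 'x where True by blast
  define c where "c = (\<Sum>y\<in>UNIV. F$a$y) / ?n"
  have Fc: "F = c *\<^sub>R ?J"
    using F class_constant_mult_Jmat[of F a] unfolding c_def by (simp add: matrix_scaleR_right)
  then have "(c * c * ?n - c) *\<^sub>R ?J = 0"
    using F by (simp add: matrix_scaleR_left matrix_scaleR_right Jmat_mult_Jmat algebra_simps)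
  then have "c * (c * ?n - 1) = 0" using J0 by (simp add: algebra_simps)
  then have "c = 0 \<or> c = 1 / ?n" by (auto simp: field_simps)
  then show "F = 0 \<or> F = (1 / ?n) *\<^sub>R ?J" using Fc by auto
qed

lemma primitive_idempotent_mult_Jmat:
  assumes "primitive_idempotent H" "H \<noteq> (1 / real CARD('x)) *\<^sub>R Jmat"
  shows "H ** Jmat = 0"
  using primitive_idempotent_mult_eq_0[OF assms(1) primitive_idempotent_Jmat assms(2)]
  by (simp add: matrix_scaleR_right)

lemma krein_expansion_exists:
  assumes "class_constant E" "class_constant F"
  shows "\<exists>q. krein_expansion d R E F q"
proof -
  let ?n = "real CARD('x)"
  have "hadamard E F \<in> span {H. primitive_idempotent H}"
    using assms by (intro class_constant_in_span_primitive class_constant_hadamard)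
  then obtain c where c: "hadamard E F = (\<Sum>H | primitive_idempotent H. c H *\<^sub>R H)"
    using span_finite[OF finite_primitive_idempotents] by auto
  then have "krein_expansion d R E F (\<lambda>H. ?n * c H)"
    unfolding krein_expansion_def prim_idem_iff by (simp add: scaleR_sum_right)
  then show ?thesis by blast
qed

text \<open>The part of a Krein expansion away from the trivial idempotent J/n, i.e. the matrix F of
  the definition of a light tail, is read off the entrywise product.\<close>

lemma krein_tail_eq:
  assumes kr: "krein_expansion d R E F q" and EF: "hadamard E F ** Jmat = c *\<^sub>R Jmat"
  shows "(\<Sum>H\<in>{H. prim_idem d R H} - {(1 / real CARD('x)) *\<^sub>R Jmat}. q H *\<^sub>R H)
         = real CARD('x) *\<^sub>R hadamard E F - c *\<^sub>R Jmat"
proof -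
  let ?n = "real CARD('x)" and ?J = "Jmat :: real^'x^'x"
  let ?P = "{H. primitive_idempotent H}" and ?J1 = "(1 / ?n) *\<^sub>R ?J"
  define T where "T = (\<Sum>H\<in>?P - {?J1}. q H *\<^sub>R H)"
  have "hadamard E F = (1 / ?n) *\<^sub>R (\<Sum>H\<in>?P. q H *\<^sub>R H)"
    using kr unfolding krein_expansion_def prim_idem_iff .
  also have "(\<Sum>H\<in>?P. q H *\<^sub>R H) = q ?J1 *\<^sub>R ?J1 + T"
    unfolding T_def using primitive_idempotent_Jmat
    by (intro sum.remove[OF finite_primitive_idempotents]) simp
  finally have had: "?n *\<^sub>R hadamard E F = q ?J1 *\<^sub>R ?J1 + T" by simp
  have "T ** ?J = 0"
    unfolding T_def by (simp add: matrix_sum_rdistrib matrix_scaleR_left primitive_idempotent_mult_Jmat)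
  then have "(?n * c) *\<^sub>R ?J = q ?J1 *\<^sub>R ?J"
    using arg_cong[OF had, of "\<lambda>M. M ** ?J"] EF
    by (simp add: matrix_add_rdistrib matrix_scaleR_left Jmat_mult_Jmat)
  then have "q ?J1 = ?n * c"
    by (simp add: vec_eq_iff Jmat_nth)
  then show ?thesis using had unfolding T_def prim_idem_iff by (simp add: algebra_simps)
qed

end

section \<open>Partially metric schemes\<close>

locale partially_metric_scheme = association_scheme d R
  for d and R :: "nat \<Rightarrow> ('x::finite \<times> 'x) set" +
  assumes d_ge_2: "d \<ge> 2" and partially_metric: "t_partially_metric 2 R"
begin

abbreviation k :: real where "k \<equiv> real (intnum R 0 1 1)"
abbreviation a1 :: real where "a1 \<equiv> real (intnum R 1 1 1)"
abbreviation b1 :: real where "b1 \<equiv> real (intnum R 1 1 2)"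

lemma R_2_iff: "(x,y) \<in> R 2 \<longleftrightarrow> (x,y) \<in> R 1 O R 1 \<and> x \<noteq> y \<and> (x,y) \<notin> R 1"
proof -
  have "\<forall>i\<in>{1..2}. R i = {(x,y). graph_dist_is (R 1) i x y}"
    using partially_metric unfolding t_partially_metric_def by (elim conjE)
  then have "R 2 = {(x,y). graph_dist_is (R 1) 2 x y}" by (rule bspec) simp
  moreover have "(\<forall>j<2. (x,y) \<notin> (R 1)^^j) \<longleftrightarrow> x \<noteq> y \<and> (x,y) \<notin> R 1"
    by (auto simp: less_2_cases_iff)
  moreover have "(R 1) ^^ 2 = R 1 O R 1" by (simp add: numeral_2_eq_2)
  ultimately show ?thesis unfolding graph_dist_is_def by simp
qed

lemma R_1_sym: "(x,y) \<in> R 1 \<Longrightarrow> (y,x) \<in> R 1"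
  and R_2_sym: "(x,y) \<in> R 2 \<Longrightarrow> (y,x) \<in> R 2"
  using R_sym[of 1 x y] R_sym[of 2 x y] d_ge_2 by auto

definition nbrs :: "'x \<Rightarrow> 'x set" where
  "nbrs x = {y. (x,y) \<in> R 1}"

lemma card_nbrs: "card (nbrs x) = intnum R 0 1 1"
proof -
  have "nbrs x = {z. (x,z) \<in> R 1 \<and> (z,x) \<in> R 1}"
    unfolding nbrs_def using R_1_sym by blast
  then show ?thesis using card_eq_intnum[of 0 1 1 x x] d_ge_2 by (simp add: R_0)
qed

lemma rel_mat_1_mult_nth: "(rel_mat R 1 ** M) $ x $ y = (\<Sum>z\<in>nbrs x. M$z$y)"
proof -
  have "(rel_mat R 1 ** M) $ x $ y = (\<Sum>z\<in>UNIV. if (x,z) \<in> R 1 then M$z$y else 0)"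
    unfolding matrix_matrix_mult_def rel_mat_def by (simp, intro sum.cong refl) simp
  then show ?thesis by (simp add: sum.If_cases nbrs_def)
qed

lemma sum_nbrs_class_constant:
  assumes "class_constant M"
  shows "(\<Sum>z\<in>nbrs x. M$x$z) = k * class_value M 1"
proof -
  have "(\<Sum>z\<in>nbrs x. M$x$z) = (\<Sum>z\<in>nbrs x. class_value M 1)"
    using class_constant_nth[OF assms, of 1 x] d_ge_2 by (intro sum.cong) (auto simp: nbrs_def)
  then show ?thesis by (simp add: card_nbrs)
qed

text \<open>The neighbours of x, seen from a neighbour y, are y itself and a1 resp. b1 vertices at
  distance 1 resp. 2 from y; this is where partial metricity is used.\<close>

lemma sum_nbrs_of_nbr:
  assumes M: "class_constant M" and xy: "(x,y) \<in> R 1"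
  shows "(\<Sum>z\<in>nbrs x. M$y$z) = class_value M 0 + a1 * class_value M 1 + b1 * class_value M 2"
proof -
  define A where "A i = {z. (x,z) \<in> R 1 \<and> (z,y) \<in> R i}" for i
  have "z = y \<or> (z,y) \<in> R 1 \<or> (z,y) \<in> R 2" if "(x,z) \<in> R 1" for z
  proof -
    have "(z,x) \<in> R 1" using that by (rule R_1_sym)
    with xy show ?thesis using R_2_iff[of z y] by blast
  qed
  then have cover: "nbrs x = insert y (A 1 \<union> A 2)"
    using xy unfolding nbrs_def A_def by blast
  have "(y,y) \<notin> R i" if "i \<in> {1, 2}" for i
    using that R_disjoint[of 0 i y y] d_ge_2 by (auto simp: R_0)
  moreover have "(z,y) \<notin> R 1 \<inter> R 2" for z
    using R_disjoint[of 1 2 z y] d_ge_2 by auto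
  ultimately have disj: "y \<notin> A 1 \<union> A 2" "A 1 \<inter> A 2 = {}"
    unfolding A_def by blast+
  have part: "(\<Sum>z\<in>A i. M$y$z) = real (intnum R 1 1 i) * class_value M i" if "i \<in> {1, 2}" for i
  proof -
    have "(\<Sum>z\<in>A i. M$y$z) = (\<Sum>z\<in>A i. class_value M i)"
    proof (rule sum.cong)
      fix z assume "z \<in> A i"
      then have "(y,z) \<in> R i" using that R_1_sym R_2_sym unfolding A_def by auto
      then show "M$y$z = class_value M i" using that d_ge_2 class_constant_nth[OF M] by auto
    qed simp
    also have "card (A i) = intnum R 1 1 i"
      unfolding A_def using that d_ge_2 card_eq_intnum[of 1 1 i x y] xy by auto
    ultimately show ?thesis by simp
  qed
  have "(\<Sum>z\<in>nbrs x. M$y$z) = M$y$y + (\<Sum>z\<in>A 1. M$y$z) + (\<Sum>z\<in>A 2. M$y$z)"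
    unfolding cover using disj by (simp add: sum.union_disjoint)
  then show ?thesis using part class_constant_diag[OF M] by simp
qed

lemma valency_eq: "k = 1 + a1 + b1"
proof -
  obtain x y where xy: "(x,y) \<in> R 1" using R_nonempty[of 1] d_ge_2 by auto
  have "class_value Jmat i = 1" for i by (simp add: class_value_def Jmat_nth split: prod.split)
  then show ?thesis
    using sum_nbrs_of_nbr[OF class_constant_Jmat xy] card_nbrs[of x] by (simp add: Jmat_nth)
qed

lemma intnum_1_1_2_pos: "intnum R 1 1 2 > 0"
proof -
  obtain x y where xy: "(x,y) \<in> R 2" using R_nonempty[of 2] d_ge_2 by auto
  then obtain z where z: "(x,z) \<in> R 1" "(z,y) \<in> R 1" using R_2_iff by blast
  then have "y \<in> {w. (z,w) \<in> R 1 \<and> (w,x) \<in> R 2}"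
    using xy R_2_sym by blast
  moreover have "card {w. (z,w) \<in> R 1 \<and> (w,x) \<in> R 2} = intnum R 1 1 2"
    using card_eq_intnum[of 1 1 2 z x] d_ge_2 R_1_sym[OF z(1)] by simp
  ultimately show ?thesis by (metis card_0_eq empty_iff finite gr0I)
qed

end

section \<open>The tail of a primitive idempotent\<close>

locale scheme_eigenspace = partially_metric_scheme d R
  for d and R :: "nat \<Rightarrow> ('x::finite \<times> 'x) set" +
  fixes E :: "real^'x^'x" and \<theta> :: real
  assumes primitive: "primitive_idempotent E" and eigen: "rel_mat R 1 ** E = \<theta> *\<^sub>R E"
begin

abbreviation e :: "nat \<Rightarrow> real" where "e \<equiv> class_value E"

lemma E_class_constant: "class_constant E" and E_idem: "E ** E = E" and E_ne_0: "E \<noteq> 0"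
  using primitive unfolding primitive_idempotent_def by auto

lemma E_inner_rows: "(\<Sum>a\<in>UNIV. E$y$a * E$z$a) = E$y$z"
proof -
  have "(E ** E)$y$z = (\<Sum>a\<in>UNIV. E$y$a * E$a$z)" by (simp add: matrix_matrix_mult_def)
  then show ?thesis using E_idem class_constant_sym[OF E_class_constant, of _ z] by simp
qed

lemma valency_mult_e1: "k * e 1 = \<theta> * e 0"
proof -
  obtain x :: 'x where True by blast
  have "(rel_mat R 1 ** E)$x$x = (\<Sum>z\<in>nbrs x. E$x$z)"
    unfolding rel_mat_1_mult_nth using class_constant_sym[OF E_class_constant] by simp
  then show ?thesis
    using eigen class_constant_diag[OF E_class_constant] sum_nbrs_class_constant[OF E_class_constant]
    by simp
qed

lemma e_recurrence: "e 0 + a1 * e 1 + b1 * e 2 = \<theta> * e 1"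
proof -
  obtain x y where xy: "(x,y) \<in> R 1" using R_nonempty[of 1] d_ge_2 by auto
  have "(rel_mat R 1 ** E)$x$y = (\<Sum>z\<in>nbrs x. E$y$z)"
    unfolding rel_mat_1_mult_nth using class_constant_sym[OF E_class_constant] by simp
  then show ?thesis
    using eigen class_constant_nth[OF E_class_constant _ xy] d_ge_2
      sum_nbrs_of_nbr[OF E_class_constant xy] by simp
qed

lemma rank_E_eq: "real (rank E) = real CARD('x) * e 0"
  using rank_eq_trace_if_symmetric_idempotent[OF class_constant_transpose[OF E_class_constant] E_idem]
  by (simp add: trace_def class_constant_diag[OF E_class_constant])

lemma e0_pos: "e 0 > 0"
proof -
  have "rank E > 0" using E_ne_0 rank_eq_0 by auto
  then have "0 < real CARD('x) * e 0" using rank_E_eq by simp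
  then show ?thesis by (simp add: zero_less_mult_iff)
qed

definition tail :: "real^'x^'x" where
  "tail = hadamard E E - (e 0 / real CARD('x)) *\<^sub>R Jmat"

abbreviation p :: "nat \<Rightarrow> real" where "p \<equiv> class_value tail"

lemma tail_nth: "tail $ x $ y = (E$x$y)\<^sup>2 - e 0 / real CARD('x)"
  by (simp add: tail_def hadamard_def Jmat_nth power2_eq_square)

lemma tail_class_constant: "class_constant tail"
  unfolding tail_def
  by (intro class_constant_diff class_constant_scaleR class_constant_hadamard
      class_constant_Jmat E_class_constant)

lemma p_eq: "p i = (e i)\<^sup>2 - e 0 / real CARD('x)"
  by (simp add: class_value_def tail_nth split: prod.split)

definition gram_vec :: "'x \<Rightarrow> 'x \<times> 'x \<Rightarrow> real" where
  "gram_vec x = (\<lambda>(a, b). E$x$a * E$x$b - (\<Sum>v\<in>UNIV. E$v$a * E$v$b) / real CARD('x))"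

lemma tail_eq_inner_gram_vec: "tail $ y $ z = (\<Sum>q\<in>UNIV. gram_vec y q * gram_vec z q)"
proof -
  define mu where "mu a b = (\<Sum>v\<in>UNIV. E$v$a * E$v$b) / real CARD('x)" for a b
  have prod: "(\<Sum>a\<in>UNIV. \<Sum>b\<in>UNIV. (E$y$a * E$y$b) * (E$z$a * E$z$b)) = (E$y$z)\<^sup>2" for y z
  proof -
    have "(\<Sum>a\<in>UNIV. \<Sum>b\<in>UNIV. (E$y$a * E$y$b) * (E$z$a * E$z$b))
        = (\<Sum>a\<in>UNIV. E$y$a * E$z$a) * (\<Sum>b\<in>UNIV. E$y$b * E$z$b)"
      by (simp add: sum_product mult_ac)
    then show ?thesis by (simp add: E_inner_rows power2_eq_square)
  qed
  have mean: "(\<Sum>a\<in>UNIV. \<Sum>b\<in>UNIV. (E$y$a * E$y$b) * mu a b) = e 0 / real CARD('x)" for y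
  proof -
    have "(\<Sum>a\<in>UNIV. \<Sum>b\<in>UNIV. (E$y$a * E$y$b) * mu a b)
        = (\<Sum>a\<in>UNIV. \<Sum>b\<in>UNIV. \<Sum>v\<in>UNIV. (E$y$a * E$y$b) * (E$v$a * E$v$b)) / real CARD('x)"
      unfolding mu_def by (simp add: sum_distrib_left sum_divide_distrib)
    also have "\<dots> = (\<Sum>v\<in>UNIV. \<Sum>a\<in>UNIV. \<Sum>b\<in>UNIV. (E$y$a * E$y$b) * (E$v$a * E$v$b)) / real CARD('x)"
      by (subst sum_swap_outer) (rule refl)
    also have "\<dots> = E$y$y / real CARD('x)" by (simp add: prod power2_eq_square E_inner_rows)
    finally show ?thesis by (simp add: class_constant_diag[OF E_class_constant])
  qed
  have mean_sq: "(\<Sum>a\<in>UNIV. \<Sum>b\<in>UNIV. mu a b * mu a b) = e 0 / real CARD('x)"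
  proof -
    have "(\<Sum>a\<in>UNIV. \<Sum>b\<in>UNIV. mu a b * mu a b)
        = (\<Sum>a\<in>UNIV. \<Sum>b\<in>UNIV. \<Sum>v\<in>UNIV. (E$v$a * E$v$b) * mu a b) / real CARD('x)"
      by (simp add: mu_def[of a b for a b] sum_distrib_right sum_divide_distrib)
    also have "\<dots> = (\<Sum>v\<in>UNIV. \<Sum>a\<in>UNIV. \<Sum>b\<in>UNIV. (E$v$a * E$v$b) * mu a b) / real CARD('x)"
      by (subst sum_swap_outer) (rule refl)
    finally show ?thesis by (simp add: mean)
  qed
  have "(\<Sum>q\<in>UNIV. gram_vec y q * gram_vec z q)
      = (\<Sum>a\<in>UNIV. \<Sum>b\<in>UNIV. (E$y$a * E$y$b) * (E$z$a * E$z$b) - (E$y$a * E$y$b) * mu a b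
          - (E$z$a * E$z$b) * mu a b + mu a b * mu a b)"
    unfolding sum_UNIV_prod gram_vec_def mu_def by (simp add: algebra_simps)
  also have "\<dots> = (E$y$z)\<^sup>2 - e 0 / real CARD('x)"
    by (simp add: sum.distrib sum_subtractf prod mean mean_sq)
  finally show ?thesis by (simp add: tail_nth)
qed

definition nbr_gram_vec :: "'x \<Rightarrow> 'x \<times> 'x \<Rightarrow> real" where
  "nbr_gram_vec x q = (\<Sum>y\<in>nbrs x. gram_vec y q)"

lemma inner_nbr_gram_vec:
  "(\<Sum>q\<in>UNIV. nbr_gram_vec x q * gram_vec z q) = (\<Sum>y\<in>nbrs x. tail $ y $ z)"
  unfolding nbr_gram_vec_def tail_eq_inner_gram_vec
  by (simp add: sum_distrib_right sum.swap[of _ UNIV])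

lemma sum_gram_vec_sq: "(\<Sum>i\<in>UNIV. (gram_vec (fst i) (snd i))\<^sup>2) = real CARD('x) * p 0"
proof -
  have "(\<Sum>q\<in>UNIV. (gram_vec x q)\<^sup>2) = p 0" for x
    using tail_eq_inner_gram_vec[of x x] class_constant_diag[OF tail_class_constant, of x]
    by (simp add: power2_eq_square)
  then show ?thesis by (simp add: sum_UNIV_prod[of "\<lambda>i. (gram_vec (fst i) (snd i))\<^sup>2"])
qed

lemma sum_gram_vec_nbr_gram_vec:
  "(\<Sum>i\<in>UNIV. gram_vec (fst i) (snd i) * nbr_gram_vec (fst i) (snd i)) = real CARD('x) * (k * p 1)"
proof -
  have "(\<Sum>q\<in>UNIV. gram_vec x q * nbr_gram_vec x q) = k * p 1" for x
    using inner_nbr_gram_vec[of x x] sum_nbrs_class_constant[OF tail_class_constant, of x]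
      class_constant_sym[OF tail_class_constant]
    by (simp add: mult.commute)
  then show ?thesis
    by (simp add: sum_UNIV_prod[of "\<lambda>i. gram_vec (fst i) (snd i) * nbr_gram_vec (fst i) (snd i)"])
qed

lemma sum_nbr_gram_vec_sq:
  "(\<Sum>i\<in>UNIV. (nbr_gram_vec (fst i) (snd i))\<^sup>2)
    = real CARD('x) * (k * (p 0 + a1 * p 1 + b1 * p 2))"
proof -
  have "(\<Sum>q\<in>UNIV. (nbr_gram_vec x q)\<^sup>2) = k * (p 0 + a1 * p 1 + b1 * p 2)" for x
  proof -
    have "(\<Sum>q\<in>UNIV. (nbr_gram_vec x q)\<^sup>2) = (\<Sum>z\<in>nbrs x. \<Sum>y\<in>nbrs x. tail $ y $ z)"
      unfolding power2_eq_square nbr_gram_vec_def[of x] sum_distrib_left inner_nbr_gram_vec[symmetric]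
      by (simp add: sum.swap[of _ UNIV] nbr_gram_vec_def)
    also have "\<dots> = (\<Sum>z\<in>nbrs x. p 0 + a1 * p 1 + b1 * p 2)"
      using sum_nbrs_of_nbr[OF tail_class_constant] class_constant_sym[OF tail_class_constant]
      by (intro sum.cong) (auto simp: nbrs_def)
    finally show ?thesis by (simp add: card_nbrs)
  qed
  then show ?thesis by (simp add: sum_UNIV_prod[of "\<lambda>i. (nbr_gram_vec (fst i) (snd i))\<^sup>2"])
qed

lemma tail_cauchy_schwarz: "k * (p 1)\<^sup>2 \<le> p 0 * (p 0 + a1 * p 1 + b1 * p 2)"
proof -
  have "(real CARD('x) * (k * p 1))\<^sup>2
      \<le> (real CARD('x) * p 0) * (real CARD('x) * (k * (p 0 + a1 * p 1 + b1 * p 2)))"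
    using Cauchy_Schwarz_ineq_sum[of "\<lambda>i. gram_vec (fst i) (snd i)" "\<lambda>i. nbr_gram_vec (fst i) (snd i)" UNIV]
    unfolding sum_gram_vec_sq sum_gram_vec_nbr_gram_vec sum_nbr_gram_vec_sq .
  then have "real CARD('x) ^ 2 * k * (k * (p 1)\<^sup>2)
      \<le> real CARD('x) ^ 2 * k * (p 0 * (p 0 + a1 * p 1 + b1 * p 2))"
    by (simp add: power2_eq_square algebra_simps)
  moreover have "real CARD('x) ^ 2 * k > 0" using valency_eq by simp
  ultimately show ?thesis by (simp only: mult_le_cancel_left_pos)
qed

lemma tail_eigen_if_equality:
  assumes p0: "p 0 > 0" and eq: "k * (p 1)\<^sup>2 = p 0 * (p 0 + a1 * p 1 + b1 * p 2)"
  shows "rel_mat R 1 ** tail = (k * p 1 / p 0) *\<^sub>R tail"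
proof -
  let ?f = "\<lambda>i. gram_vec (fst i) (snd i)" and ?g = "\<lambda>i. nbr_gram_vec (fst i) (snd i)"
  note sums = sum_gram_vec_nbr_gram_vec sum_gram_vec_sq sum_nbr_gram_vec_sq
  have "(real CARD('x) * (k * p 1))\<^sup>2 = (real CARD('x))\<^sup>2 * k * (k * (p 1)\<^sup>2)"
    by (simp add: power2_eq_square)
  also have "\<dots> = real CARD('x) * p 0 * (real CARD('x) * (k * (p 0 + a1 * p 1 + b1 * p 2)))"
    unfolding eq by (simp add: power2_eq_square)
  finally have "(\<Sum>i\<in>UNIV. ?f i * ?g i)\<^sup>2 = (\<Sum>i\<in>UNIV. (?f i)\<^sup>2) * (\<Sum>i\<in>UNIV. (?g i)\<^sup>2)"
    unfolding sums .
  moreover have "(\<Sum>i\<in>UNIV. (?f i)\<^sup>2) > 0" unfolding sums using p0 by simp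
  ultimately have proportional: "nbr_gram_vec x q = (k * p 1 / p 0) * gram_vec x q" for x q
    using Cauchy_Schwarz_sum_eq_imp_proportional[of UNIV ?f ?g "(x,q)"] unfolding sums by simp
  have "(rel_mat R 1 ** tail) $ x $ z = (k * p 1 / p 0) * tail $ x $ z" for x z
  proof -
    have "(rel_mat R 1 ** tail) $ x $ z = (\<Sum>q\<in>UNIV. nbr_gram_vec x q * gram_vec z q)"
      by (simp only: rel_mat_1_mult_nth inner_nbr_gram_vec)
    also have "\<dots> = (k * p 1 / p 0) * tail $ x $ z"
      by (simp add: proportional tail_eq_inner_gram_vec sum_distrib_left mult.assoc)
    finally show ?thesis .
  qed
  then show ?thesis by (simp add: vec_eq_iff)
qed

lemma equality_if_tail_eigen:
  assumes "rel_mat R 1 ** tail = \<eta> *\<^sub>R tail"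
  shows "k * (p 1)\<^sup>2 = p 0 * (p 0 + a1 * p 1 + b1 * p 2)"
proof -
  obtain x y where xy: "(x,y) \<in> R 1" using R_nonempty[of 1] d_ge_2 by auto
  have row: "(\<Sum>z\<in>nbrs x. tail $ z $ w) = \<eta> * tail $ x $ w" for w
    using arg_cong[OF assms, of "\<lambda>M. M $ x $ w"] unfolding rel_mat_1_mult_nth by simp
  have "k * p 1 = \<eta> * p 0"
    using row[of x] sum_nbrs_class_constant[OF tail_class_constant, of x]
      class_constant_sym[OF tail_class_constant] class_constant_diag[OF tail_class_constant]
    by simp
  moreover have "p 0 + a1 * p 1 + b1 * p 2 = \<eta> * p 1"
    using row[of y] sum_nbrs_of_nbr[OF tail_class_constant xy]
      class_constant_sym[OF tail_class_constant] class_constant_nth[OF tail_class_constant _ xy] d_ge_2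
    by simp
  ultimately show ?thesis by (simp add: power2_eq_square algebra_simps)
qed

text \<open>If p 0 vanished, all Gram vectors would vanish, hence p 1 = 0, so (e 1)^2 = e 0 / n =
  (e 0)^2 and the eigenvalue would be \<plusminus>k.\<close>

lemma tail_diag_pos:
  assumes "\<theta> \<noteq> k" "\<theta> \<noteq> - k"
  shows "p 0 > 0"
proof (rule ccontr)
  assume "\<not> p 0 > 0"
  moreover have "0 \<le> real CARD('x) * p 0"
    unfolding sum_gram_vec_sq[symmetric] by (intro sum_nonneg) simp
  then have "p 0 \<ge> 0" by (simp add: zero_le_mult_iff)
  ultimately have "(\<Sum>i\<in>UNIV. (gram_vec (fst i) (snd i))\<^sup>2) = 0" using sum_gram_vec_sq by simp
  then have "\<forall>i\<in>UNIV. (gram_vec (fst i) (snd i))\<^sup>2 = 0"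
    by (subst (asm) sum_nonneg_eq_0_iff) auto
  then have "gram_vec x q = 0" for x q by (cases q) auto
  then have "tail $ x $ y = 0" for x y by (simp add: tail_eq_inner_gram_vec)
  then have "p 0 = 0" "p 1 = 0" unfolding class_value_def by (simp_all split: prod.split)
  then have "(e 1)\<^sup>2 = (e 0)\<^sup>2" unfolding p_eq by simp
  then have "(\<theta> * e 0)\<^sup>2 = (k * e 0)\<^sup>2"
    using valency_mult_e1 by (metis power_mult_distrib)
  then have "\<theta>\<^sup>2 = k\<^sup>2" using e0_pos by (simp add: power_mult_distrib)
  then show False using assms by (simp add: power2_eq_iff)
qed

lemma light_tail_iff_tail_eigen:
  assumes "tail \<noteq> 0"
  shows "light_tail d R E \<longleftrightarrow> (\<exists>\<eta>. rel_mat R 1 ** tail = \<eta> *\<^sub>R tail)"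
proof -
  have EJ: "hadamard E E ** Jmat = e 0 *\<^sub>R Jmat"
    using class_constant_mult_Jmat[OF class_constant_hadamard[OF E_class_constant E_class_constant]]
      E_inner_rows class_constant_diag[OF E_class_constant]
    by (simp add: hadamard_def)
  have tail_sum: "(\<Sum>H\<in>{H. prim_idem d R H} - {(1 / real CARD('x)) *\<^sub>R Jmat}. q H *\<^sub>R H)
      = real CARD('x) *\<^sub>R tail" if "krein_expansion d R E E q" for q
    using krein_tail_eq[OF that EJ] by (simp add: tail_def algebra_simps)
  have eigen_scaled: "rel_mat R 1 ** (real CARD('x) *\<^sub>R tail) = \<eta> *\<^sub>R (real CARD('x) *\<^sub>R tail)
      \<longleftrightarrow> rel_mat R 1 ** tail = \<eta> *\<^sub>R tail" for \<eta>
    by (simp only: matrix_scaleR_right scaleR_left_commute[of \<eta>] scaleR_cancel_left) simp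
  let ?F = "\<lambda>q. \<Sum>H\<in>{H. prim_idem d R H} - {(1 / real CARD('x)) *\<^sub>R Jmat}. q H *\<^sub>R H"
  show ?thesis
  proof
    assume "light_tail d R E"
    then obtain q \<eta> where q: "krein_expansion d R E E q" "rel_mat R 1 ** ?F q = \<eta> *\<^sub>R ?F q"
      unfolding light_tail_def Let_def by blast
    have "rel_mat R 1 ** tail = \<eta> *\<^sub>R tail"
      using q(2) unfolding tail_sum[OF q(1)] eigen_scaled .
    then show "\<exists>\<eta>. rel_mat R 1 ** tail = \<eta> *\<^sub>R tail" ..
  next
    assume "\<exists>\<eta>. rel_mat R 1 ** tail = \<eta> *\<^sub>R tail"
    then obtain \<eta> where "rel_mat R 1 ** tail = \<eta> *\<^sub>R tail" ..
    moreover obtain q where q: "krein_expansion d R E E q"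
      using krein_expansion_exists E_class_constant by blast
    ultimately have "?F q \<noteq> 0 \<and> rel_mat R 1 ** ?F q = \<eta> *\<^sub>R ?F q"
      unfolding tail_sum[OF q] eigen_scaled using assms by simp
    then show "light_tail d R E"
      unfolding light_tail_def Let_def using primitive prim_idem_iff q by blast
  qed
qed

end

section \<open>The multiplicity bound\<close>

lemma multiplicity_bound_denominator_pos:
  fixes a b k t :: real
  assumes "k = 1 + a + b" "a \<ge> 0" "b > 0" "t \<noteq> - k"
  shows "((a + 1) * t + k)\<^sup>2 + k * a * b > 0"
proof -
  have "k * a * b \<ge> 0" using assms by simp
  moreover have "((a + 1) * t + k)\<^sup>2 > 0 \<or> k * a * b > 0"
  proof (cases "a = 0")
    case True
    then show ?thesis using assms by auto
  next
    case False
    then show ?thesis using assms by (simp add: zero_less_mult_iff)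
  qed
  ultimately show ?thesis by (smt (verit) zero_le_power2)
qed

text \<open>The factor that stays positive away from \<theta> = \<plusminus>k, written as a sum of squares.\<close>

lemma multiplicity_bound_sos_pos:
  fixes a b k t :: real
  assumes k: "k = 1 + a + b" and "a \<ge> 0" "b > 0" "t \<noteq> k" "t \<noteq> - k"
  shows "b*k^3 + a*b*k*t*t + k*(t*t-k-a*t)^2 - b*t^4 > 0"
proof -
  define T where "T = t*t - k - a*t"
  have sos: "b*k^3 + a*b*k*t*t + k*T^2 - b*t^4 = a*b*(t-k)^2 + (T - b*k)^2 + a*(b*t - T)^2"
    unfolding T_def using k by algebra
  have "a*b*(t-k)^2 > 0 \<or> (T - b*k)^2 > 0"
  proof (cases "a = 0")
    case True
    have "T \<noteq> b * k"
    proof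
      assume "T = b * k"
      then have "(t - k) * (t + k) = 0" unfolding T_def using True k by (simp add: algebra_simps)
      then show False using assms by auto
    qed
    then show ?thesis by simp
  next
    case False
    then show ?thesis using assms by simp
  qed
  moreover have "a*b*(t-k)^2 \<ge> 0" "a*(b*t - T)^2 \<ge> 0" using assms by simp_all
  ultimately show ?thesis unfolding sos[unfolded T_def] T_def by (smt (verit) zero_le_power2)
qed

text \<open>After clearing denominators, the Cauchy-Schwarz defect of the tail is a positive multiple
  of m minus the bound; here e0, e1, e2 are the values of E on R 0, R 1, R 2.\<close>

lemma multiplicity_bound_factorization:
  fixes a b k t e0 e1 e2 n :: real
  assumes k: "k = 1 + a + b" and a: "a \<ge> 0" and b: "b > 0" and n: "n > 0" and e0: "e0 > 0"
    and h1: "k * e1 = t * e0" and h2: "e0 + a * e1 + b * e2 = t * e1" and tk: "t \<noteq> k" "t \<noteq> - k"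
  defines "p0 \<equiv> e0\<^sup>2 - e0 / n" and "p1 \<equiv> e1\<^sup>2 - e0 / n" and "p2 \<equiv> e2\<^sup>2 - e0 / n"
  shows "\<exists>c>0. p0 * (p0 + a * p1 + b * p2) - k * p1\<^sup>2
           = c * (n * e0 - (k - k * (t + 1)\<^sup>2 * a * (a + 1) / (((a + 1) * t + k)\<^sup>2 + k * a * b)))"
proof -
  define m where "m = n * e0"
  define Den where "Den = ((a + 1) * t + k)\<^sup>2 + k * a * b"
  define B where "B = k - k * (t + 1)\<^sup>2 * a * (a + 1) / Den"
  define T where "T = t*t - k - a*t"
  define Aa where "Aa = b*k^3 + a*b*k*t*t + k*T^2 - b*t^4"
  define Bb where "Bb = b*k^3 + b*k^2 + a*b*t*t + T^2 - 2*b*k*t*t"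
  have kpos: "k > 0" using k a b by simp
  have Den: "Den > 0" unfolding Den_def using multiplicity_bound_denominator_pos k a b tk by blast
  have Aa: "Aa > 0" unfolding Aa_def T_def using multiplicity_bound_sos_pos k a b tk by blast
  have e2: "b * k * e2 = T * e0" using h1 h2 unfolding T_def by algebra
  have "Bb * Den = Aa * (Den - (t+1)^2*a*(a+1))"
    unfolding Bb_def Aa_def Den_def T_def using k by algebra
  moreover have "B * Den = k * (Den - (t+1)^2*a*(a+1))"
    unfolding B_def using Den by (simp add: field_simps)
  ultimately have "(k * Bb) * Den = (Aa * B) * Den" by algebra
  then have kBb: "k * Bb = Aa * B" using Den by simp
  have "(p0 * (p0 + a * p1 + b * p2) - k * p1\<^sup>2) * (n^2 * (b^2 * k^4))
      = b * k * e0^2 * m * (m * Aa - k * Bb)"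
    unfolding p0_def p1_def p2_def m_def Aa_def Bb_def using n k h1 e2
    by (simp add: field_simps power2_eq_square) algebra
  also have "\<dots> = (b * k * e0^2 * m * Aa) * (m - B)" using kBb by (simp add: algebra_simps)
  finally have "p0 * (p0 + a * p1 + b * p2) - k * p1\<^sup>2
      = (b * k * e0^2 * m * Aa / (n^2 * (b^2 * k^4))) * (m - B)"
    using n b kpos by (simp add: field_simps)
  moreover have "b * k * e0^2 * m * Aa / (n^2 * (b^2 * k^4)) > 0"
    using b kpos e0 n Aa unfolding m_def by simp
  ultimately show ?thesis unfolding m_def B_def Den_def by blast
qed

context scheme_eigenspace
begin

lemma multiplicity_bound:
  assumes "\<theta> \<noteq> k" "\<theta> \<noteq> - k"
  defines "B \<equiv> k - k * (\<theta> + 1)\<^sup>2 * a1 * (a1 + 1) / (((a1 + 1) * \<theta> + k)\<^sup>2 + k * a1 * b1)"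
  shows "B \<le> real (rank E) \<and> (real (rank E) = B \<longleftrightarrow> light_tail d R E)"
proof -
  have "\<exists>c>0. p 0 * (p 0 + a1 * p 1 + b1 * p 2) - k * (p 1)\<^sup>2 = c * (real (rank E) - B)"
    unfolding p_eq rank_E_eq B_def
    by (rule multiplicity_bound_factorization[OF valency_eq _ _ _ e0_pos valency_mult_e1
          e_recurrence assms(1,2)])
      (use intnum_1_1_2_pos in simp_all)
  then obtain c where c: "c > 0"
    and defect: "p 0 * (p 0 + a1 * p 1 + b1 * p 2) - k * (p 1)\<^sup>2 = c * (real (rank E) - B)"
    by blast
  have p0: "p 0 > 0" using tail_diag_pos[OF assms(1,2)] .
  then have "tail \<noteq> 0" using class_constant_diag[OF tail_class_constant] by auto
  then have "light_tail d R E \<longleftrightarrow> k * (p 1)\<^sup>2 = p 0 * (p 0 + a1 * p 1 + b1 * p 2)"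
    using light_tail_iff_tail_eigen tail_eigen_if_equality[OF p0] equality_if_tail_eigen by blast
  moreover have "0 \<le> c * (real (rank E) - B)" using tail_cauchy_schwarz defect by simp
  then have "B \<le> real (rank E)" using c by (simp add: zero_le_mult_iff)
  moreover have "real (rank E) = B \<longleftrightarrow> k * (p 1)\<^sup>2 = p 0 * (p 0 + a1 * p 1 + b1 * p 2)"
    using defect c by auto
  ultimately show ?thesis by simp
qed

end

theorem theorem2p2:
  fixes d :: nat and R :: "nat \<Rightarrow> ('x::finite \<times> 'x) set"
    and E :: "real^'x^'x" and \<theta> :: real
  assumes "assoc_scheme d R"
    and "d \<ge> 2"
    and "t_partially_metric 2 R"
    and "intnum R 0 1 1 \<ge> 3"
    and "prim_idem d R E"
    and "rel_mat R 1 ** E = \<theta> *\<^sub>R E"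
    and "\<theta> \<noteq> real (intnum R 0 1 1)" and "\<theta> \<noteq> - real (intnum R 0 1 1)"
  shows "let k = real (intnum R 0 1 1); a1 = real (intnum R 1 1 1);
             b1 = real (intnum R 1 1 2); m = real (rank E)
         in (m \<ge> k - k * (\<theta> + 1)^2 * a1 * (a1 + 1) / (((a1 + 1) * \<theta> + k)^2 + k * a1 * b1))
            \<and> (m = k - k * (\<theta> + 1)^2 * a1 * (a1 + 1) / (((a1 + 1) * \<theta> + k)^2 + k * a1 * b1)
               \<longleftrightarrow> light_tail d R E)"
proof -
  interpret association_scheme d R by (rule association_scheme.intro) fact
  interpret scheme_eigenspace d R E \<theta>
    using assms(2,3,5,6) by unfold_locales (simp_all add: prim_idem_iff)
  show ?thesis unfolding Let_def using multiplicity_bound[OF assms(7,8)] by simp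
qed

end
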